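(* In the slot formulation of the weighted balls-into-bins process, for every $0<a<\lambda/2$ and every $t\ge0$, $$\mathbb E\left[\Phi(x^s(t+1))-\Phi(x^s(t))\,\middle|\,x^s(t)\right]\le\sum_{i=1}^N\left(p_i\left(a+Sa^2\right)-\left(\frac aN-S\frac{a^2}{N^2}\right)\right)e^{a x^s_i(t)}.$$
   Context: Weighted balls into weighted bins: $n$ bins with positive integer weights $N_1,\dots,N_n$, $N=\sum_iN_i$; $\mathcal D$ on $[n]$ is $(\alpha,\beta)$-biased, i.e. $\frac{N_i}{\alpha N}\le\Pr_{\mathcal D}[i]\le\frac{\beta N_i}{N}$. Ball weights $w(t)$ are i.i.d. from $\mathcal W$ on $[0,\infty)$ with $\mathbb E[\mathcal W]=1$ and $M(z)=\mathbb E[e^{z\mathcal W}]$ finite at $z=\lambda$ for some $\lambda>0$; $S\ge1$ is a constant with $M''(z)\le2S$ for all $|z|<\lambda/2$. Each round two bins are sampled independently from $\mathcal D$ and the ball goes to the sampled bin with smaller value $v_i(t-1)=w_i(t-1)/N_i$ ($w_i(t)$ = total weight in bin $i$ after round $t$). Slot formulation: bin $i$ consists of $N_i$ unit slots, each with value $v_i(t)$; the normalized slot vector $x^s(t)\in\mathbb R^N$ has, for each slot of bin $i$, the entry $v_i(t)-\frac1N\sum_{t'\le t}w(t')$, and its entries are indexed in nonincreasing order $x^s_1(t)\ge\dots\ge x^s_N(t)$. Equivalently, each round two slots are drawn independently (a slot of bin $i$ with probability $\Pr_{\mathcal D}[i]/N_i$), the one later in the sorted order is selected, and the ball's weight is spread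 evenly over the slots of its bin. $p_i=p_i(t)$ is the conditional probability, given $x^s(t)$, that the selected slot in round $t+1$ is the $i$-th slot in the sorted order. For $a>0$ and $y\in\mathbb R^N$: $\Phi(y)=\sum_je^{ay_j}$, $\Psi(y)=\sum_je^{-ay_j}$, $\Gamma(y)=\Phi(y)+\Psi(y)$. *)

theory Defs
  imports "HOL-Probability.Probability"
begin

text \<open>Bins are 0,...,n-1 with weights Nw i; the load (total ball weight) of bin i is ld i.
  A slot is a pair (i,k) with i < n and k < Nw i.\<close>

definition slots :: "nat \<Rightarrow> (nat \<Rightarrow> nat) \<Rightarrow> (nat \<times> nat) set" where
  "slots n Nw = {(i, k). i < n \<and> k < Nw i}"

definition totN :: "nat \<Rightarrow> (nat \<Rightarrow> nat) \<Rightarrow> nat" where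
  "totN n Nw = (\<Sum>i<n. Nw i)"

definition bin_val :: "(nat \<Rightarrow> nat) \<Rightarrow> (nat \<Rightarrow> real) \<Rightarrow> nat \<Rightarrow> real" where
  "bin_val Nw ld i = ld i / real (Nw i)"

definition is_slot_sorting ::
  "nat \<Rightarrow> (nat \<Rightarrow> nat) \<Rightarrow> (nat \<Rightarrow> real) \<Rightarrow> (nat \<Rightarrow> nat \<times> nat) \<Rightarrow> bool" where
  "is_slot_sorting n Nw ld \<sigma> \<longleftrightarrow>
     bij_betw \<sigma> {..<totN n Nw} (slots n Nw) \<and>
     (\<forall>j j'. j \<le> j' \<and> j' < totN n Nw \<longrightarrow>
        bin_val Nw ld (fst (\<sigma> j')) \<le> bin_val Nw ld (fst (\<sigma> j)))"

text \<open>normalized slot vector x^s(t), indexed by sorted position (0-based);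
  the total weight thrown so far equals the total load.\<close>
definition slot_vec ::
  "nat \<Rightarrow> (nat \<Rightarrow> nat) \<Rightarrow> (nat \<Rightarrow> real) \<Rightarrow> (nat \<Rightarrow> nat \<times> nat) \<Rightarrow> nat \<Rightarrow> real" where
  "slot_vec n Nw ld \<sigma> j =
     bin_val Nw ld (fst (\<sigma> j)) - (\<Sum>i<n. ld i) / real (totN n Nw)"

definition Phi :: "real \<Rightarrow> nat \<Rightarrow> (nat \<Rightarrow> real) \<Rightarrow> real" where
  "Phi a K y = (\<Sum>j<K. exp (a * y j))"

definition slot_prob ::
  "(nat \<Rightarrow> real) \<Rightarrow> (nat \<Rightarrow> nat) \<Rightarrow> (nat \<Rightarrow> nat \<times> nat) \<Rightarrow> nat \<Rightarrow> real" where
  "slot_prob pD Nw \<sigma> j = pD (fst (\<sigma> j)) / real (Nw (fst (\<sigma> j)))"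

text \<open>p_i: probability that the selected slot (the later of two independent samples)
  is the slot at sorted position i\<close>
definition sel_prob ::
  "nat \<Rightarrow> (nat \<Rightarrow> nat) \<Rightarrow> (nat \<Rightarrow> real) \<Rightarrow> (nat \<Rightarrow> nat \<times> nat) \<Rightarrow> nat \<Rightarrow> real" where
  "sel_prob n Nw pD \<sigma> i =
     (\<Sum>j1<totN n Nw. \<Sum>j2<totN n Nw.
        if max j1 j2 = i then slot_prob pD Nw \<sigma> j1 * slot_prob pD Nw \<sigma> j2 else 0)"

text \<open>Phi of the normalized slot vector after a ball of weight w is placed into bin b
  (Phi is a symmetric function, so it is summed over all slots directly).\<close>
definition next_Phi ::
  "real \<Rightarrow> nat \<Rightarrow> (nat \<Rightarrow> nat) \<Rightarrow> (nat \<Rightarrow> real) \<Rightarrow> nat \<Rightarrow> real \<Rightarrow> real" where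
  "next_Phi a n Nw ld b w =
     (\<Sum>s\<in>slots n Nw.
        exp (a * ((ld(b := ld b + w)) (fst s) / real (Nw (fst s))
                   - ((\<Sum>i<n. ld i) + w) / real (totN n Nw))))"

text \<open>E[Phi(x^s(t+1)) - Phi(x^s(t)) | x^s(t)]: two slot positions j1, j2 drawn independently,
  the later one selected, ball weight drawn from W independently.\<close>
definition exp_change ::
  "real \<Rightarrow> nat \<Rightarrow> (nat \<Rightarrow> nat) \<Rightarrow> (nat \<Rightarrow> real) \<Rightarrow> real measure \<Rightarrow> (nat \<Rightarrow> real)
     \<Rightarrow> (nat \<Rightarrow> nat \<times> nat) \<Rightarrow> real" where
  "exp_change a n Nw pD W ld \<sigma> =
     (\<integral>w. (\<Sum>j1<totN n Nw. \<Sum>j2<totN n Nw.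
        slot_prob pD Nw \<sigma> j1 * slot_prob pD Nw \<sigma> j2 *
        (next_Phi a n Nw ld (fst (\<sigma> (max j1 j2))) w
         - Phi a (totN n Nw) (slot_vec n Nw ld \<sigma>))) \<partial>W)"

definition mgf :: "real measure \<Rightarrow> real \<Rightarrow> real" where
  "mgf W z = (\<integral>x. exp (z * x) \<partial>W)"

end

theory Submission
  imports Defs
begin

text \<open>When a ball of weight w lands in bin \<beta>, the term exp (a x_j) of \<Phi> is multiplied by
  exp (a w (1/N_\<beta> - 1/N)) for the N_\<beta> slots of bin \<beta> and by exp (- a w / N) for all other slots.
  Averaging over w turns these factors into values of the moment generating function M.
  Taylor's theorem with M'' \<le> 2S gives M c \<le> 1 + c + S c^2, and exp z \<ge> 1 + z with E W = 1
  gives M c \<ge> 1 + c; hence for every slot i of bin \<beta> the expected change of \<Phi> is at most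
  (a + S a^2) exp (a x_i) - (a/N - S a^2/N^2) \<Phi>. Averaging over the selected slot i with
  the probabilities p_i, which sum to 1, gives the bound.\<close>

lemma power_le_exp_mult:
  fixes x d :: real
  assumes "0 \<le> x" "0 < d"
  shows "x ^ m \<le> (real m / d) ^ m * exp (d * x)"
proof (cases "m = 0")
  case False
  have "d * x / real m \<le> exp (d * x / real m)"
    using exp_ge_add_one_self[of "d * x / real m"] by linarith
  then have "(d * x / real m) ^ m \<le> exp (d * x / real m) ^ m"
    using assms by (intro power_mono) auto
  also have "\<dots> = exp (d * x)"
    using False by (simp flip: exp_of_nat_mult)
  finally have "(d * x / real m) ^ m \<le> exp (d * x)" .
  moreover have "x ^ m = (real m / d) ^ m * (d * x / real m) ^ m"
    using False assms by (simp flip: power_mult_distrib)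
  ultimately show ?thesis
    using assms by (simp add: mult_left_mono)
qed (use assms in simp)

lemma abs_exp_diff_le:
  fixes u v :: real
  shows "\<bar>exp u - exp v\<bar> \<le> \<bar>u - v\<bar> * exp (max u v)"
proof -
  have "exp p - exp q \<le> (p - q) * exp p" if "q \<le> p" for p q :: real
  proof -
    have "exp p * (1 + (q - p)) \<le> exp p * exp (q - p)"
      by (intro mult_left_mono) (auto simp: exp_ge_add_one_self)
    then show ?thesis by (simp add: exp_diff algebra_simps)
  qed
  from this[of v u] this[of u v] show ?thesis
    by (cases "v \<le> u") (auto simp: max_def abs_minus_commute)
qed

lemma abs_diff_quotient_power_exp_le:
  fixes x y z c :: real
  assumes "0 \<le> x" "y \<le> c" "z \<le> c" "y \<noteq> z"
  shows "\<bar>(x ^ k * exp (y * x) - x ^ k * exp (z * x)) / (y - z)\<bar> \<le> x ^ Suc k * exp (c * x)"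
proof -
  have "\<bar>(x ^ k * exp (y * x) - x ^ k * exp (z * x)) / (y - z)\<bar>
      = x ^ k * \<bar>exp (y * x) - exp (z * x)\<bar> / \<bar>y - z\<bar>"
    using assms by (simp add: abs_mult flip: right_diff_distrib)
  also have "\<dots> \<le> x ^ k * (\<bar>y * x - z * x\<bar> * exp (max (y * x) (z * x))) / \<bar>y - z\<bar>"
    using assms by (intro divide_right_mono mult_left_mono abs_exp_diff_le) auto
  also have "\<dots> = x ^ Suc k * exp (max (y * x) (z * x))"
    using assms by (simp add: abs_mult flip: left_diff_distrib)
  also have "\<dots> \<le> x ^ Suc k * exp (c * x)"
    using assms by (intro mult_left_mono) (auto intro: mult_right_mono)
  finally show ?thesis .
qed

locale nonneg_mgf = prob_space W for W :: "real measure" +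
  fixes lam :: real
  assumes sets_W: "sets W = sets borel"
    and AE_nonneg: "AE x in W. 0 \<le> x"
    and lam_pos: "0 < lam"
    and integrable_exp_lam: "integrable W (\<lambda>x. exp (lam * x))"
begin

definition exp_moment :: "nat \<Rightarrow> real \<Rightarrow> real" where
  "exp_moment k z = (\<integral>x. x ^ k * exp (z * x) \<partial>W)"

lemma borel_measurable_power_exp [measurable]: "(\<lambda>x. x ^ k * exp (z * x)) \<in> borel_measurable W"
  unfolding measurable_cong_sets[OF sets_W refl] by measurable

lemma integrable_power_exp:
  assumes "z < lam"
  shows "integrable W (\<lambda>x. x ^ k * exp (z * x))"
proof (rule Bochner_Integration.integrable_bound)
  define c where "c = max 0 z"
  define d where "d = lam - c"
  have d: "0 < d" using assms lam_pos by (simp add: d_def c_def)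
  show "integrable W (\<lambda>x. (real k / d) ^ k * exp (lam * x))"
    using integrable_exp_lam by (rule integrable_mult_right)
  show "AE x in W. norm (x ^ k * exp (z * x)) \<le> norm ((real k / d) ^ k * exp (lam * x))"
    using AE_nonneg
  proof eventually_elim
    case (elim x)
    have "norm (x ^ k * exp (z * x)) \<le> x ^ k * exp (c * x)"
      using elim by (auto simp: abs_mult c_def intro!: mult_left_mono mult_right_mono)
    also have "\<dots> \<le> ((real k / d) ^ k * exp (d * x)) * exp (c * x)"
      using power_le_exp_mult[OF elim d, of k] by (intro mult_right_mono) auto
    also have "\<dots> = (real k / d) ^ k * exp (lam * x)"
      by (simp add: d_def mult_exp_exp left_diff_distrib)
    finally show ?case by simp
  qed
qed simp

lemma tendsto_exp_moment_diff_quotient: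
  assumes Y_lim: "Y \<longlonglongrightarrow> z" and Y: "\<And>i. Y i \<le> c" "\<And>i. Y i \<noteq> z" and c: "z \<le> c" "c < lam"
  shows "(\<lambda>i. (exp_moment k (Y i) - exp_moment k z) / (Y i - z)) \<longlonglongrightarrow> exp_moment (Suc k) z"
proof -
  define g where "g i x = (x ^ k * exp (Y i * x) - x ^ k * exp (z * x)) / (Y i - z)" for i x
  have quotient: "(exp_moment k (Y i) - exp_moment k z) / (Y i - z) = (\<integral>x. g i x \<partial>W)" for i
    using integrable_power_exp[of "Y i" k] integrable_power_exp[of z k] Y(1)[of i] c
    by (simp add: g_def exp_moment_def)
  have "(\<lambda>i. \<integral>x. g i x \<partial>W) \<longlonglongrightarrow> exp_moment (Suc k) z"
    unfolding exp_moment_def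
  proof (rule integral_dominated_convergence[where w="\<lambda>x. x ^ Suc k * exp (c * x)"])
    show "g i \<in> borel_measurable W" for i
      unfolding g_def measurable_cong_sets[OF sets_W refl] by measurable
    show "integrable W (\<lambda>x. x ^ Suc k * exp (c * x))"
      using c(2) by (rule integrable_power_exp)
    show "AE x in W. (\<lambda>i. g i x) \<longlonglongrightarrow> x ^ Suc k * exp (z * x)"
    proof (rule AE_I2)
      fix x
      have "((\<lambda>y. x ^ k * exp (y * x)) has_real_derivative x ^ Suc k * exp (z * x)) (at z)"
        by (auto intro!: derivative_eq_intros)
      with Y_lim Y(2) show "(\<lambda>i. g i x) \<longlonglongrightarrow> x ^ Suc k * exp (z * x)"
        unfolding has_field_derivative_iff tendsto_at_iff_sequentially g_def o_def by auto
    qed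
    show "AE x in W. norm (g i x) \<le> x ^ Suc k * exp (c * x)" for i
      using AE_nonneg
    proof eventually_elim
      case (elim x)
      show ?case
        unfolding g_def real_norm_def
        by (rule abs_diff_quotient_power_exp_le) (use elim Y c in auto)
    qed
  qed (rule borel_measurable_power_exp)
  then show ?thesis unfolding quotient .
qed

lemma has_real_derivative_exp_moment:
  assumes "z < lam"
  shows "(exp_moment k has_real_derivative exp_moment (Suc k) z) (at z)"
  unfolding has_field_derivative_iff tendsto_at_iff_sequentially
proof (intro allI impI)
  define c where "c = (z + lam) / 2"
  have c: "z < c" "c < lam" using assms by (simp_all add: c_def)
  fix X :: "nat \<Rightarrow> real" assume X: "\<forall>i. X i \<in> UNIV - {z}" "X \<longlonglongrightarrow> z"
  obtain i0 where i0: "\<And>i. i0 \<le> i \<Longrightarrow> X i < c"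
    using order_tendstoD(2)[OF X(2) c(1)] by (auto simp: eventually_sequentially)
  have "(\<lambda>i. (exp_moment k (X (i + i0)) - exp_moment k z) / (X (i + i0) - z))
      \<longlonglongrightarrow> exp_moment (Suc k) z"
    using X c i0[of "_ + i0"]
    by (intro tendsto_exp_moment_diff_quotient LIMSEQ_ignore_initial_segment) (auto intro: less_imp_le)
  then show "((\<lambda>y. (exp_moment k y - exp_moment k z) / (y - z)) \<circ> X) \<longlonglongrightarrow> exp_moment (Suc k) z"
    unfolding o_def by (rule LIMSEQ_offset)
qed

lemma mgf_eq_exp_moment: "mgf W = exp_moment 0"
  by (rule ext) (simp add: mgf_def exp_moment_def mult.commute)

lemma deriv2_mgf:
  assumes "y < lam"
  shows "deriv (deriv (mgf W)) y = exp_moment 2 y"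
proof -
  have deriv_mgf: "deriv (exp_moment 0) u = exp_moment 1 u" if "u \<in> {..<lam}" for u
    using has_real_derivative_exp_moment[of u 0] that by (simp add: DERIV_imp_deriv)
  have "(exp_moment 1 has_real_derivative exp_moment 2 y) (at y)"
    using has_real_derivative_exp_moment[OF assms, of 1] by (simp add: numeral_2_eq_2)
  then have "(deriv (exp_moment 0) has_real_derivative exp_moment 2 y) (at y)"
    by (rule has_field_derivative_transform_within_open[where S="{..<lam}"])
      (use assms deriv_mgf in auto)
  then show ?thesis unfolding mgf_eq_exp_moment by (rule DERIV_imp_deriv)
qed

lemma mgf_ge_one_plus:
  assumes "z < lam" and mean: "(\<integral>x. x \<partial>W) = 1"
  shows "1 + z \<le> mgf W z"
proof -
  have int_id: "integrable W (\<lambda>x. x)"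
    using integrable_power_exp[of 0 1] lam_pos by simp
  have "1 + z = (\<integral>x. 1 + z * x \<partial>W)"
    using int_id mean by (simp add: prob_space)
  also have "\<dots> \<le> (\<integral>x. exp (z * x) \<partial>W)"
    using int_id integrable_power_exp[OF assms(1), of 0]
    by (intro integral_mono) (auto simp: exp_ge_add_one_self)
  finally show ?thesis by (simp add: mgf_def)
qed

lemma mgf_le_quadratic:
  assumes mean: "(\<integral>x. x \<partial>W) = 1" and z: "\<bar>z\<bar> < lam"
    and deriv2_le: "\<And>y. \<bar>y\<bar> < \<bar>z\<bar> \<Longrightarrow> deriv (deriv (mgf W)) y \<le> 2 * S"
  shows "mgf W z \<le> 1 + z + S * z\<^sup>2"
proof (cases "z = 0")
  case True then show ?thesis by (simp add: mgf_def prob_space)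
next
  case False
  have derivs: "\<forall>m t. m < 2 \<and> - \<bar>z\<bar> \<le> t \<and> t \<le> \<bar>z\<bar> \<longrightarrow>
      (exp_moment m has_real_derivative exp_moment (Suc m) t) (at t)"
    using z by (auto intro!: has_real_derivative_exp_moment)
  have "\<exists>t. (if z < 0 then z < t \<and> t < 0 else 0 < t \<and> t < z) \<and>
      exp_moment 0 z = (\<Sum>m<2. exp_moment m 0 / fact m * (z - 0) ^ m) + exp_moment 2 t / fact 2 * (z - 0) ^ 2"
    by (rule Taylor[OF _ refl derivs]) (use False in auto)
  then obtain t where between: "if z < 0 then z < t \<and> t < 0 else 0 < t \<and> t < z"
      and taylor: "exp_moment 0 z = (\<Sum>m<2. exp_moment m 0 / fact m * (z - 0) ^ m) + exp_moment 2 t / fact 2 * (z - 0) ^ 2"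
    by blast
  from between have t: "\<bar>t\<bar> < \<bar>z\<bar>" by (simp split: if_splits)
  have "exp_moment 0 0 = 1" "exp_moment 1 0 = 1"
    using mean by (simp_all add: exp_moment_def prob_space)
  then have "mgf W z = 1 + z + exp_moment 2 t / 2 * z\<^sup>2"
    using taylor by (simp add: mgf_eq_exp_moment numeral_2_eq_2)
  moreover have "exp_moment 2 t \<le> 2 * S"
    using deriv2_le[OF t] deriv2_mgf[of t] t z by (simp add: abs_less_iff)
  then have "exp_moment 2 t * z\<^sup>2 \<le> 2 * S * z\<^sup>2"
    by (rule mult_right_mono) simp
  ultimately show ?thesis by linarith
qed

lemma integrable_sum_exp_affine:
  assumes "finite I" "\<And>j. j \<in> I \<Longrightarrow> c j < lam"
  shows "integrable W (\<lambda>w. \<Sum>j\<in>I. exp (u j + c j * w))"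
  using integrable_power_exp[OF assms(2), of _ 0] assms(1)
  by (auto simp: exp_add mult.commute intro!: integrable_mult_right)

lemma integral_sum_exp_affine:
  assumes "finite I" "\<And>j. j \<in> I \<Longrightarrow> c j < lam"
  shows "(\<integral>w. (\<Sum>j\<in>I. exp (u j + c j * w)) \<partial>W) = (\<Sum>j\<in>I. exp (u j) * mgf W (c j))"
  using integrable_power_exp[OF assms(2), of _ 0] assms(1)
  by (auto simp: exp_add mgf_def intro!: integrable_mult_right sum.cong)

end

lemma mgf_gap_le:
  fixes m N a S Mb Mo c :: real
  assumes "1 \<le> m" "m \<le> N" "0 < a" "0 \<le> S"
    and c: "c = a * (1 / m - 1 / N)"
    and upper: "Mb \<le> 1 + c + S * c\<^sup>2" and lower: "1 - a / N \<le> Mo"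
  shows "m * (Mb - Mo) \<le> a + S * a\<^sup>2"
proof -
  have "1 / N \<le> 1 / m" using assms by (intro divide_left_mono) auto
  then have "0 \<le> c" using assms by (simp add: c)
  moreover have "c \<le> a * (1 / m)" unfolding c using assms by (intro mult_left_mono) auto
  ultimately have c_bounds: "0 \<le> c" "c \<le> a / m" by simp_all
  have "m * c\<^sup>2 \<le> m * (a / m)\<^sup>2"
    using c_bounds assms by (intro mult_left_mono power_mono) auto
  also have "\<dots> = a\<^sup>2 / m" using assms by (simp add: power2_eq_square)
  also have "\<dots> \<le> a\<^sup>2" using assms by (simp add: divide_le_eq)
  finally have "S * (m * c\<^sup>2) \<le> S * a\<^sup>2" using assms by (simp add: mult_left_mono)
  have "m * (Mb - Mo) \<le> m * (c + S * c\<^sup>2 + a / N)"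
    using assms by (intro mult_left_mono) auto
  also have "\<dots> = a + S * (m * c\<^sup>2)"
    using assms by (simp add: c field_simps power2_eq_square)
  finally show ?thesis using \<open>S * (m * c\<^sup>2) \<le> S * a\<^sup>2\<close> by linarith
qed

lemma slots_eq_Sigma: "slots n Nw = Sigma {..<n} (\<lambda>i. {..<Nw i})"
  by (auto simp: slots_def)

lemma sum_pairs_max_eq_sel_prob:
  "(\<Sum>j1<totN n Nw. \<Sum>j2<totN n Nw. slot_prob pD Nw \<sigma> j1 * slot_prob pD Nw \<sigma> j2 * H (max j1 j2))
     = (\<Sum>i<totN n Nw. sel_prob n Nw pD \<sigma> i * H i)"
proof -
  let ?q = "slot_prob pD Nw \<sigma>" and ?N = "totN n Nw"
  have "(\<Sum>i<?N. sel_prob n Nw pD \<sigma> i * H i)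
      = (\<Sum>i<?N. \<Sum>j1<?N. \<Sum>j2<?N. if max j1 j2 = i then ?q j1 * ?q j2 * H i else 0)"
    unfolding sel_prob_def sum_distrib_right by (intro sum.cong refl) simp
  also have "\<dots> = (\<Sum>j1<?N. \<Sum>j2<?N. \<Sum>i<?N. if max j1 j2 = i then ?q j1 * ?q j2 * H i else 0)"
    by (rule trans[OF sum.swap], rule sum.cong[OF refl], rule sum.swap)
  also have "\<dots> = (\<Sum>j1<?N. \<Sum>j2<?N. ?q j1 * ?q j2 * H (max j1 j2))"
    by (intro sum.cong refl) (auto simp: max_def)
  finally show ?thesis by simp
qed

lemma sum_sel_prob:
  "(\<Sum>i<totN n Nw. sel_prob n Nw pD \<sigma> i) = (\<Sum>j<totN n Nw. slot_prob pD Nw \<sigma> j)\<^sup>2"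
  using sum_pairs_max_eq_sel_prob[where H="\<lambda>_. 1"]
  by (simp add: power2_eq_square sum_product)

locale slot_bijection =
  fixes n :: nat and Nw :: "nat \<Rightarrow> nat" and \<sigma> :: "nat \<Rightarrow> nat \<times> nat"
  assumes bij: "bij_betw \<sigma> {..<totN n Nw} (slots n Nw)"
begin

lemma position_in_slots:
  assumes "j < totN n Nw"
  shows "fst (\<sigma> j) < n" "snd (\<sigma> j) < Nw (fst (\<sigma> j))"
  using bij_betw_apply[OF bij, of j] assms by (auto simp: slots_def split: prod.splits)

lemma sum_positions_eq_sum_slots: "(\<Sum>j<totN n Nw. f (\<sigma> j)) = (\<Sum>s\<in>slots n Nw. f s)"
  by (rule sum.reindex_bij_betw[OF bij])

lemma sum_positions_by_bin:
  "(\<Sum>j<totN n Nw. f (fst (\<sigma> j))) = (\<Sum>i<n. real (Nw i) * f i)"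
proof -
  have "(\<Sum>i<n. \<Sum>k<Nw i. f i) = (\<Sum>(i, k)\<in>Sigma {..<n} (\<lambda>i. {..<Nw i}). f i)"
    by (rule sum.Sigma) auto
  then show ?thesis
    by (simp add: sum_positions_eq_sum_slots[of "\<lambda>s. f (fst s)"] slots_eq_Sigma split_beta)
qed

lemma sum_positions_split_bin:
  assumes "\<beta> < n"
  shows "(\<Sum>j<totN n Nw. f (fst (\<sigma> j)) * (if fst (\<sigma> j) = \<beta> then u else v))
    = v * (\<Sum>j<totN n Nw. f (fst (\<sigma> j))) + real (Nw \<beta>) * f \<beta> * (u - v)"
proof -
  have "(\<Sum>i<n. real (Nw i) * (f i * (if i = \<beta> then u else v)))
      = (\<Sum>i<n. v * (real (Nw i) * f i) + (if i = \<beta> then real (Nw i) * f i * (u - v) else 0))"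
    by (intro sum.cong refl) (simp add: algebra_simps)
  then show ?thesis
    using assms sum_positions_by_bin[of f] sum_positions_by_bin[of "\<lambda>i. f i * (if i = \<beta> then u else v)"]
    by (simp add: sum.distrib sum_distrib_left)
qed

lemma sum_slot_prob:
  assumes "\<And>i. i < n \<Longrightarrow> 0 < Nw i"
  shows "(\<Sum>j<totN n Nw. slot_prob pD Nw \<sigma> j) = (\<Sum>i<n. pD i)"
  using assms by (simp add: slot_prob_def sum_positions_by_bin[of "\<lambda>i. pD i / real (Nw i)"])

lemma sel_prob_nonneg:
  assumes "\<And>i. i < n \<Longrightarrow> 0 \<le> pD i"
  shows "0 \<le> sel_prob n Nw pD \<sigma> i"
proof -
  have "0 \<le> slot_prob pD Nw \<sigma> j" if "j < totN n Nw" for j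
    using assms position_in_slots(1)[OF that] by (simp add: slot_prob_def)
  then show ?thesis
    unfolding sel_prob_def by (intro sum_nonneg) auto
qed

text \<open>Adding weight w to bin \<beta> changes the normalized value of every slot of bin i
  by w * value_increment \<beta> i.\<close>

definition value_increment :: "nat \<Rightarrow> nat \<Rightarrow> real" where
  "value_increment \<beta> i = (if i = \<beta> then 1 / real (Nw \<beta>) else 0) - 1 / real (totN n Nw)"

lemma value_increment_le_1: "value_increment \<beta> i \<le> 1"
proof -
  have "1 / real (Nw \<beta>) \<le> 1" by (cases "Nw \<beta>") auto
  moreover have "0 \<le> 1 / real (totN n Nw)" by simp
  ultimately show ?thesis unfolding value_increment_def by argo
qed

lemma next_Phi_eq_sum_exp:
  "next_Phi a n Nw ld \<beta> w =
     (\<Sum>j<totN n Nw. exp (a * slot_vec n Nw ld \<sigma> j + a * value_increment \<beta> (fst (\<sigma> j)) * w))"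
  unfolding next_Phi_def sum_positions_eq_sum_slots[symmetric]
  by (intro sum.cong refl)
    (auto simp: slot_vec_def bin_val_def value_increment_def algebra_simps add_divide_distrib diff_divide_distrib)

end

locale slot_process = nonneg_mgf W lam + slot_bijection n Nw \<sigma>
  for W :: "real measure" and lam :: real and n :: nat and Nw :: "nat \<Rightarrow> nat"
    and \<sigma> :: "nat \<Rightarrow> nat \<times> nat"
begin

lemma integrable_next_Phi:
  assumes "0 < a" "a < lam"
  shows "integrable W (next_Phi a n Nw ld \<beta>)"
  unfolding next_Phi_eq_sum_exp using assms
  by (intro integrable_sum_exp_affine)
    (auto intro: le_less_trans[OF mult_left_mono[OF value_increment_le_1]])

lemma integral_next_Phi:
  assumes "0 < a" "a < lam"
  shows "(\<integral>w. next_Phi a n Nw ld \<beta> w \<partial>W) = (\<Sum>j<totN n Nw.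
     exp (a * slot_vec n Nw ld \<sigma> j) * mgf W (a * value_increment \<beta> (fst (\<sigma> j))))"
  unfolding next_Phi_eq_sum_exp using assms
  by (intro integral_sum_exp_affine)
    (auto intro: le_less_trans[OF mult_left_mono[OF value_increment_le_1]])

lemma exp_change_eq_sum_sel_prob:
  assumes "0 < a" "a < lam"
  shows "exp_change a n Nw pD W ld \<sigma> = (\<Sum>i<totN n Nw. sel_prob n Nw pD \<sigma> i *
     ((\<integral>w. next_Phi a n Nw ld (fst (\<sigma> i)) w \<partial>W) - Phi a (totN n Nw) (slot_vec n Nw ld \<sigma>)))"
proof -
  let ?\<Phi> = "Phi a (totN n Nw) (slot_vec n Nw ld \<sigma>)"
  have "exp_change a n Nw pD W ld \<sigma> = (\<integral>w. (\<Sum>i<totN n Nw. sel_prob n Nw pD \<sigma> i *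
      (next_Phi a n Nw ld (fst (\<sigma> i)) w - ?\<Phi>)) \<partial>W)"
    unfolding exp_change_def sum_pairs_max_eq_sel_prob[where H="\<lambda>i. next_Phi a n Nw ld (fst (\<sigma> i)) _ - ?\<Phi>"] ..
  also have "\<dots> = (\<Sum>i<totN n Nw. sel_prob n Nw pD \<sigma> i *
      ((\<integral>w. next_Phi a n Nw ld (fst (\<sigma> i)) w \<partial>W) - ?\<Phi>))"
    using integrable_next_Phi[OF assms]
    by (simp add: Bochner_Integration.integral_sum Bochner_Integration.integral_diff prob_space)
  finally show ?thesis .
qed

lemma integral_next_Phi_split:
  assumes "0 < a" "a < lam" and i: "i < totN n Nw"
  defines "\<beta> \<equiv> fst (\<sigma> i)"
  shows "(\<integral>w. next_Phi a n Nw ld \<beta> w \<partial>W)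
    = mgf W (- a / real (totN n Nw)) * Phi a (totN n Nw) (slot_vec n Nw ld \<sigma>)
      + real (Nw \<beta>) * exp (a * slot_vec n Nw ld \<sigma> i)
        * (mgf W (a * value_increment \<beta> \<beta>) - mgf W (- a / real (totN n Nw)))"
proof -
  define e where "e b = exp (a * (bin_val Nw ld b - (\<Sum>i<n. ld i) / real (totN n Nw)))" for b
  have slot_e: "exp (a * slot_vec n Nw ld \<sigma> j) = e (fst (\<sigma> j))" for j
    by (simp add: slot_vec_def e_def)
  have mgf_incr: "mgf W (a * value_increment \<beta> b)
      = (if b = \<beta> then mgf W (a * value_increment \<beta> \<beta>) else mgf W (- a / real (totN n Nw)))" for b
    by (simp add: value_increment_def)
  have "(\<integral>w. next_Phi a n Nw ld \<beta> w \<partial>W) = (\<Sum>j<totN n Nw. e (fst (\<sigma> j)) *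
      (if fst (\<sigma> j) = \<beta> then mgf W (a * value_increment \<beta> \<beta>) else mgf W (- a / real (totN n Nw))))"
    by (simp add: integral_next_Phi[OF assms(1,2)] slot_e mgf_incr)
  also have "\<dots> = mgf W (- a / real (totN n Nw)) * (\<Sum>j<totN n Nw. e (fst (\<sigma> j)))
      + real (Nw \<beta>) * e \<beta> * (mgf W (a * value_increment \<beta> \<beta>) - mgf W (- a / real (totN n Nw)))"
    using position_in_slots(1)[OF i] by (simp add: sum_positions_split_bin \<beta>_def)
  finally show ?thesis by (simp add: Phi_def slot_e \<beta>_def)
qed

lemma bin_weight_bounds:
  assumes "i < totN n Nw"
  shows "1 \<le> real (Nw (fst (\<sigma> i)))" "real (Nw (fst (\<sigma> i))) \<le> real (totN n Nw)"
proof -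
  have "Nw (fst (\<sigma> i)) \<le> totN n Nw"
    unfolding totN_def using position_in_slots(1)[OF assms] by (intro member_le_sum) auto
  then show "1 \<le> real (Nw (fst (\<sigma> i)))" "real (Nw (fst (\<sigma> i))) \<le> real (totN n Nw)"
    using position_in_slots(2)[OF assms] by auto
qed

lemma mgf_bin_gap_le:
  assumes mean: "(\<integral>x. x \<partial>W) = 1" and "0 \<le> S"
    and deriv2_le: "\<And>z. \<bar>z\<bar> < lam / 2 \<Longrightarrow> deriv (deriv (mgf W)) z \<le> 2 * S"
    and a: "0 < a" "a < lam / 2" and i: "i < totN n Nw"
  defines "\<beta> \<equiv> fst (\<sigma> i)"
  shows "real (Nw \<beta>) * (mgf W (a * value_increment \<beta> \<beta>) - mgf W (- a / real (totN n Nw)))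
    \<le> a + S * a\<^sup>2"
proof (rule mgf_gap_le)
  let ?N = "real (totN n Nw)"
  show Nw: "1 \<le> real (Nw \<beta>)" "real (Nw \<beta>) \<le> ?N"
    using bin_weight_bounds[OF i] by (simp_all add: \<beta>_def)
  show "a * value_increment \<beta> \<beta> = a * (1 / real (Nw \<beta>) - 1 / ?N)"
    by (simp add: value_increment_def)
  have "1 / ?N \<le> 1 / real (Nw \<beta>)"
    using Nw by (intro divide_left_mono) auto
  then have "0 \<le> a * value_increment \<beta> \<beta>" "a * value_increment \<beta> \<beta> \<le> a * 1"
    using a value_increment_le_1[of \<beta> \<beta>] by (auto simp: value_increment_def intro: mult_left_mono)
  then have cb_small: "\<bar>a * value_increment \<beta> \<beta>\<bar> < lam / 2"
    using a by linarith
  show "mgf W (a * value_increment \<beta> \<beta>)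
      \<le> 1 + a * value_increment \<beta> \<beta> + S * (a * value_increment \<beta> \<beta>)\<^sup>2"
  proof (rule mgf_le_quadratic[OF mean])
    show "\<bar>a * value_increment \<beta> \<beta>\<bar> < lam" using cb_small lam_pos by linarith
    show "deriv (deriv (mgf W)) y \<le> 2 * S" if "\<bar>y\<bar> < \<bar>a * value_increment \<beta> \<beta>\<bar>" for y
      using that cb_small by (intro deriv2_le) linarith
  qed
  show "1 - a / ?N \<le> mgf W (- a / ?N)"
    using mgf_ge_one_plus[OF _ mean, of "- a / ?N"] a Nw lam_pos
    by (simp add: less_le_trans[of _ 0])
qed (use a \<open>0 \<le> S\<close> in auto)

lemma integral_next_Phi_le:
  assumes mean: "(\<integral>x. x \<partial>W) = 1" and S: "0 \<le> S"
    and deriv2_le: "\<And>z. \<bar>z\<bar> < lam / 2 \<Longrightarrow> deriv (deriv (mgf W)) z \<le> 2 * S"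
    and a: "0 < a" "a < lam / 2" and i: "i < totN n Nw"
  shows "(\<integral>w. next_Phi a n Nw ld (fst (\<sigma> i)) w \<partial>W) - Phi a (totN n Nw) (slot_vec n Nw ld \<sigma>)
    \<le> (a + S * a\<^sup>2) * exp (a * slot_vec n Nw ld \<sigma> i)
      - (a / real (totN n Nw) - S * a\<^sup>2 / (real (totN n Nw))\<^sup>2) * Phi a (totN n Nw) (slot_vec n Nw ld \<sigma>)"
proof -
  define \<beta> where "\<beta> = fst (\<sigma> i)"
  define N where "N = real (totN n Nw)"
  define \<Phi> where "\<Phi> = Phi a (totN n Nw) (slot_vec n Nw ld \<sigma>)"
  define gap where "gap = real (Nw \<beta>) * (mgf W (a * value_increment \<beta> \<beta>) - mgf W (- a / N))"
  have "0 < N" "a / N \<le> a"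
    using bin_weight_bounds[OF i] a by (auto simp: N_def divide_le_eq)
  then have "mgf W (- a / N) \<le> 1 + (- a / N) + S * (- a / N)\<^sup>2"
    using a deriv2_le by (intro mgf_le_quadratic[OF mean]) (auto simp: abs_of_pos)
  moreover have "0 \<le> \<Phi>" unfolding \<Phi>_def Phi_def by (intro sum_nonneg) simp
  ultimately have "(mgf W (- a / N) - 1) * \<Phi> \<le> - (a / N - S * a\<^sup>2 / N\<^sup>2) * \<Phi>"
    by (intro mult_right_mono) (auto simp: power_divide)
  moreover have "exp (a * slot_vec n Nw ld \<sigma> i) * gap \<le> exp (a * slot_vec n Nw ld \<sigma> i) * (a + S * a\<^sup>2)"
    using mgf_bin_gap_le[OF mean S deriv2_le a i] by (simp add: gap_def \<beta>_def N_def)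
  moreover have "(\<integral>w. next_Phi a n Nw ld \<beta> w \<partial>W) - \<Phi>
      = (mgf W (- a / N) - 1) * \<Phi> + exp (a * slot_vec n Nw ld \<sigma> i) * gap"
    using integral_next_Phi_split[OF a(1) _ i, of ld] a
    by (simp add: \<beta>_def N_def \<Phi>_def gap_def algebra_simps)
  ultimately show ?thesis
    unfolding \<beta>_def[symmetric] N_def[symmetric] \<Phi>_def[symmetric] by (simp add: algebra_simps)
qed

end

theorem lemma3:
  fixes n :: nat and Nw :: "nat \<Rightarrow> nat" and pD :: "nat \<Rightarrow> real"
    and \<alpha> \<beta> lam S a :: real and W :: "real measure"
    and ld :: "nat \<Rightarrow> real" and \<sigma> :: "nat \<Rightarrow> nat \<times> nat"
  assumes bins_pos: "\<forall>i<n. 0 < Nw i"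
    and D_sum: "(\<Sum>i<n. pD i) = 1"
    and D_nonneg: "\<forall>i<n. 0 \<le> pD i"
    and ab_pos: "0 < \<alpha>" "0 < \<beta>"
    and D_biased: "\<forall>i<n. real (Nw i) / (\<alpha> * real (totN n Nw)) \<le> pD i \<and>
                          pD i \<le> \<beta> * real (Nw i) / real (totN n Nw)"
    and W_prob: "prob_space W"
    and W_borel: "sets W = sets borel"
    and W_nonneg: "AE x in W. 0 \<le> x"
    and W_mean: "(\<integral>x. x \<partial>W) = 1"
    and lam_pos: "0 < lam"
    and W_mgf: "integrable W (\<lambda>x. exp (lam * x))"
    and S_ge: "1 \<le> S"
    and S_bound: "\<forall>z. \<bar>z\<bar> < lam / 2 \<longrightarrow> deriv (deriv (mgf W)) z \<le> 2 * S"
    and a_pos: "0 < a" and a_small: "a < lam / 2"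
    and loads: "\<forall>i<n. 0 \<le> ld i"
    and sorted: "is_slot_sorting n Nw ld \<sigma>"
  shows "exp_change a n Nw pD W ld \<sigma> \<le>
    (\<Sum>i<totN n Nw.
       (sel_prob n Nw pD \<sigma> i * (a + S * a\<^sup>2)
        - (a / real (totN n Nw) - S * a\<^sup>2 / (real (totN n Nw))\<^sup>2))
       * exp (a * slot_vec n Nw ld \<sigma> i))"
proof -
  interpret slot_process W lam n Nw \<sigma>
    using W_prob W_borel W_nonneg lam_pos W_mgf sorted
    by (intro slot_process.intro nonneg_mgf.intro nonneg_mgf_axioms.intro slot_bijection.intro)
      (simp_all add: is_slot_sorting_def)
  define N where "N = totN n Nw"
  define p where "p = sel_prob n Nw pD \<sigma>"
  define x where "x = slot_vec n Nw ld \<sigma>"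
  define A where "A = a + S * a\<^sup>2"
  define B where "B = a / real N - S * a\<^sup>2 / (real N)\<^sup>2"
  have p_nonneg: "0 \<le> p i" for i
    using D_nonneg by (simp add: p_def sel_prob_nonneg)
  have p_sum: "(\<Sum>i<N. p i) = 1"
    using bins_pos D_sum by (simp add: p_def N_def sum_sel_prob sum_slot_prob)
  have "exp_change a n Nw pD W ld \<sigma>
      = (\<Sum>i<N. p i * ((\<integral>w. next_Phi a n Nw ld (fst (\<sigma> i)) w \<partial>W) - Phi a N x))"
    using a_pos a_small by (simp add: exp_change_eq_sum_sel_prob p_def N_def x_def)
  also have "\<dots> \<le> (\<Sum>i<N. p i * (A * exp (a * x i) - B * Phi a N x))"
    using integral_next_Phi_le[OF W_mean _ S_bound[rule_format] a_pos a_small] S_ge p_nonneg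
    by (intro sum_mono mult_left_mono) (auto simp: N_def x_def A_def B_def)
  also have "\<dots> = (\<Sum>i<N. p i * A * exp (a * x i)) - B * Phi a N x * (\<Sum>i<N. p i)"
    by (simp add: right_diff_distrib sum_subtractf sum_distrib_left mult_ac)
  also have "\<dots> = (\<Sum>i<N. (p i * A - B) * exp (a * x i))"
    by (simp add: p_sum Phi_def left_diff_distrib sum_subtractf sum_distrib_left)
  finally show ?thesis by (simp add: N_def p_def x_def A_def B_def)
qed

end
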